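(* Let $m\ge0$ and let $f:\mathbb{R}^n\to\mathbb{R}$ be $m$-weakly convex and $M$-smooth. Let $\alpha>m$, $\lambda=\alpha-m$, $\eta\ge0$, $\epsilon\ge0$. If $x$ is an $(\eta,\epsilon)$-inexact stationary point of $f$, then $$\|\nabla f(x)\|\le\Big(1+\frac M\alpha\Big)\alpha\Big(\frac2\lambda\eta+\sqrt{\frac2\lambda\epsilon}\Big).$$ Consequently, for $\delta\ge0$, if $\epsilon\le\frac2\lambda\eta^2$ and $\eta\le\frac{\delta\lambda}{4(1+M/\alpha)\alpha}$, then $\|\nabla f(x)\|\le\delta$.
   Context: A function $f$ is $m$-weakly convex ($m\ge 0$) if $x\mapsto f(x)+\frac{m}{2}\|x\|^2$ is convex. For $\epsilon\ge 0$, $\partial_\epsilon f(x)=\{v\in\mathbb{R}^n: f(y)\ge f(x)+\langle v,y-x\rangle-\frac{m}{2}\|y-x\|^2-\epsilon\ \ \forall y\}$. A point $x$ is an $(\eta,\epsilon)$-inexact stationary point if $\mathrm{dist}(0,\partial_\epsilon f(x))\le\eta$. $M$-smooth means differentiable with $M$-Lipschitz gradient. *)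

theory Defs
  imports "HOL-Analysis.Analysis"
begin

definition weakly_convex :: "real \<Rightarrow> (real^'n \<Rightarrow> real) \<Rightarrow> bool" where
  "weakly_convex m f \<longleftrightarrow> m \<ge> 0 \<and> convex_on UNIV (\<lambda>x. f x + m / 2 * (norm x)^2)"

definition eps_subdiff :: "real \<Rightarrow> real \<Rightarrow> (real^'n \<Rightarrow> real) \<Rightarrow> real^'n \<Rightarrow> (real^'n) set" where
  "eps_subdiff m \<epsilon> f x = {v. \<forall>y. f y \<ge> f x + v \<bullet> (y - x) - m / 2 * (norm (y - x))^2 - \<epsilon>}"

definition inexact_stationary :: "real \<Rightarrow> real \<Rightarrow> real \<Rightarrow> (real^'n \<Rightarrow> real) \<Rightarrow> real^'n \<Rightarrow> bool" where
  "inexact_stationary m \<eta> \<epsilon> f x \<longleftrightarrow> eps_subdiff m \<epsilon> f x \<noteq> {} \<and> infdist 0 (eps_subdiff m \<epsilon> f x) \<le> \<eta>"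

definition grad :: "(real^'n \<Rightarrow> real) \<Rightarrow> real^'n \<Rightarrow> real^'n" where
  "grad f x = (SOME g. (f has_derivative (\<lambda>h. g \<bullet> h)) (at x))"

definition M_smooth :: "real \<Rightarrow> (real^'n \<Rightarrow> real) \<Rightarrow> bool" where
  "M_smooth M f \<longleftrightarrow> (\<forall>x. f differentiable (at x)) \<and>
     (\<forall>x y. norm (grad f x - grad f y) \<le> M * norm (x - y))"

end

theory Submission
  imports Defs
begin

text \<open>An \<open>\<epsilon>\<close>-subgradient \<open>v\<close> bounds \<open>f\<close> from below by a quadratic model, while smoothness
  bounds \<open>f\<close> from above by the model built on the gradient. Testing both at a short step in the
  direction \<open>v - \<nabla>f(x)\<close> shows \<open>\<parallel>v - \<nabla>f(x)\<parallel>\<^sup>2 \<le> 2\<epsilon>/t\<close> for every admissible step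
  length \<open>t\<close>; choosing \<open>t = \<lambda>/(\<alpha>+M)\<^sup>2\<close> and letting \<open>v\<close> approach the point of
  \<open>\<partial>\<^sub>\<epsilon>f(x)\<close> nearest to \<open>0\<close> gives the bound.\<close>

lemma linear_eq_inner_sum_Basis:
  fixes L :: "'a::euclidean_space \<Rightarrow> real"
  assumes "linear L"
  shows "L = (\<lambda>h. (\<Sum>i\<in>Basis. L i *\<^sub>R i) \<bullet> h)"
proof
  fix h
  have "L h = L (\<Sum>i\<in>Basis. (h \<bullet> i) *\<^sub>R i)" by (simp add: euclidean_representation)
  also have "\<dots> = (\<Sum>i\<in>Basis. (h \<bullet> i) * L i)" using assms by (simp add: linear_sum linear_scale)
  also have "\<dots> = (\<Sum>i\<in>Basis. L i *\<^sub>R i) \<bullet> h"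
    by (simp add: inner_sum_left inner_commute[of h] mult.commute)
  finally show "L h = (\<Sum>i\<in>Basis. L i *\<^sub>R i) \<bullet> h" .
qed

lemma has_derivative_grad:
  fixes f :: "real^'n \<Rightarrow> real"
  assumes "f differentiable (at z)"
  shows "(f has_derivative (\<lambda>h. grad f z \<bullet> h)) (at z)"
proof -
  obtain L where L: "(f has_derivative L) (at z)" using assms by (auto simp: differentiable_def)
  then have "linear L" using has_derivative_linear by blast
  then have "\<exists>g. (f has_derivative (\<lambda>h. g \<bullet> h)) (at z)"
    using L linear_eq_inner_sum_Basis[of L] by metis
  then show ?thesis unfolding grad_def by (rule someI_ex)
qed

lemma M_smooth_nonneg:
  fixes f :: "real^'n \<Rightarrow> real"
  assumes "M_smooth M f"
  shows "M \<ge> 0"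
proof -
  obtain b :: "real^'n" where b: "b \<in> Basis" using nonempty_Basis by blast
  have "norm (grad f x - grad f (x + b)) \<le> M * norm (x - (x + b))" for x
    using assms unfolding M_smooth_def by blast
  moreover have "norm (x - (x + b)) = 1" for x using b by (simp add: norm_Basis)
  ultimately show ?thesis by (metis mult.right_neutral norm_ge_zero order_trans)
qed

lemma M_smooth_upper_bound:
  fixes f :: "real^'n \<Rightarrow> real"
  assumes sm: "M_smooth M f"
  shows "f (x + d) \<le> f x + grad f x \<bullet> d + M * (norm d)^2"
proof -
  have diff: "\<And>z. f differentiable (at z)" using sm by (simp add: M_smooth_def)
  define \<phi> where "\<phi> s = f (x + s *\<^sub>R d) - s * (grad f x \<bullet> d)" for s
  have D: "(\<phi> has_real_derivative (grad f (x + s *\<^sub>R d) \<bullet> d - grad f x \<bullet> d)) (at s)" for s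
  proof -
    have line: "((\<lambda>s. x + s *\<^sub>R d) has_derivative (\<lambda>h. h *\<^sub>R d)) (at s)"
      by (auto intro!: derivative_eq_intros)
    have "((f \<circ> (\<lambda>s. x + s *\<^sub>R d)) has_derivative
        ((\<lambda>h. grad f (x + s *\<^sub>R d) \<bullet> h) \<circ> (\<lambda>h. h *\<^sub>R d))) (at s)"
      by (rule diff_chain_at[OF line has_derivative_grad[OF diff]])
    moreover have "(\<lambda>h. grad f (x + s *\<^sub>R d) \<bullet> h) \<circ> (\<lambda>h. h *\<^sub>R d) = (*) (grad f (x + s *\<^sub>R d) \<bullet> d)"
      by (auto simp: o_def mult.commute)
    ultimately have "((\<lambda>s. f (x + s *\<^sub>R d)) has_real_derivative (grad f (x + s *\<^sub>R d) \<bullet> d)) (at s)"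
      by (simp add: has_field_derivative_def o_def)
    then show ?thesis unfolding \<phi>_def by (auto intro!: derivative_eq_intros)
  qed
  have "continuous_on {0..1} \<phi>"
    using D by (meson DERIV_continuous continuous_at_imp_continuous_on)
  then obtain l z where z: "0 < z" "z < 1" and lz: "(\<phi> has_real_derivative l) (at z)"
    and mvt: "\<phi> 1 - \<phi> 0 = (1 - 0) * l"
    using MVT[of 0 1 \<phi>] D real_differentiable_def by force
  have "l = (grad f (x + z *\<^sub>R d) - grad f x) \<bullet> d"
    using DERIV_unique[OF lz D] by (simp add: inner_diff_left)
  also have "\<dots> \<le> norm (grad f (x + z *\<^sub>R d) - grad f x) * norm d" by (rule norm_cauchy_schwarz)
  also have "\<dots> \<le> M * norm ((x + z *\<^sub>R d) - x) * norm d"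
  proof (rule mult_right_mono)
    show "norm (grad f (x + z *\<^sub>R d) - grad f x) \<le> M * norm ((x + z *\<^sub>R d) - x)"
      using sm unfolding M_smooth_def by blast
  qed simp
  also have "\<dots> = z * (M * (norm d)^2)" using z by (simp add: power2_eq_square)
  also have "\<dots> \<le> M * (norm d)^2"
    using z M_smooth_nonneg[OF sm] by (simp add: mult_left_le_one_le)
  finally show ?thesis using mvt unfolding \<phi>_def by simp
qed

lemma eps_subdiff_near_grad:
  fixes f :: "real^'n \<Rightarrow> real"
  assumes sm: "M_smooth M f" and v: "v \<in> eps_subdiff m \<epsilon> f x"
    and t: "t > 0" "(2 * M + m) * t \<le> 1"
  shows "(norm (v - grad f x))^2 \<le> 2 * \<epsilon> / t"
proof -
  define u where "u = v - grad f x"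
  define N where "N = (norm u)^2"
  define d where "d = t *\<^sub>R u"
  have "f (x + d) \<ge> f x + v \<bullet> d - m / 2 * (norm d)^2 - \<epsilon>"
    using v by (auto simp: eps_subdiff_def elim!: allE[of _ "x + d"])
  moreover have "f (x + d) \<le> f x + grad f x \<bullet> d + M * (norm d)^2"
    by (rule M_smooth_upper_bound[OF sm])
  ultimately have "u \<bullet> d \<le> (M + m / 2) * (norm d)^2 + \<epsilon>"
    by (simp add: u_def inner_diff_left algebra_simps)
  moreover have "u \<bullet> d = t * N" by (simp add: d_def N_def power2_norm_eq_inner)
  moreover have "(M + m / 2) * (norm d)^2 = ((M + m / 2) * t) * (t * N)"
    using t by (simp add: d_def N_def power_mult_distrib power2_eq_square)
  ultimately have "t * N \<le> ((M + m / 2) * t) * (t * N) + \<epsilon>"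
    by linarith
  moreover have "((M + m / 2) * t) * (t * N) \<le> 1 / 2 * (t * N)"
    using t by (intro mult_right_mono) (auto simp: N_def algebra_simps)
  ultimately have "t * N \<le> 2 * \<epsilon>" by simp
  then show ?thesis using t by (simp add: N_def u_def field_simps)
qed

lemma norm_le_infdist_zero_add:
  fixes A :: "'a::real_normed_vector set"
  assumes "A \<noteq> {}" and "\<And>v. v \<in> A \<Longrightarrow> norm (v - g) \<le> r"
  shows "norm g \<le> infdist 0 A + r"
proof -
  have "norm g - r \<le> dist 0 v" if "v \<in> A" for v
    using assms(2)[OF that] norm_triangle_ineq4[of v "v - g"] by simp
  then have "norm g - r \<le> infdist 0 A"
    using assms(1) by (simp add: infdist_notempty cINF_greatest)
  then show ?thesis by simp
qed

lemma eps_subdiff_dist_grad_le: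
  fixes f :: "real^'n \<Rightarrow> real"
  assumes sm: "M_smooth M f" and v: "v \<in> eps_subdiff m \<epsilon> f x"
    and "0 \<le> m" "m < \<alpha>" "0 \<le> \<epsilon>"
  shows "norm (v - grad f x) \<le> (\<alpha> + M) * sqrt (2 / (\<alpha> - m) * \<epsilon>)"
proof -
  define L where "L = \<alpha> + M"
  have M0: "M \<ge> 0" by (rule M_smooth_nonneg[OF sm])
  then have L0: "L > 0" using assms by (simp add: L_def)
  have "L^2 - (2 * M + m) * (\<alpha> - m) = \<alpha> * (\<alpha> - m) + (M + m)^2"
    by (simp add: L_def power2_eq_square algebra_simps)
  moreover have "\<alpha> * (\<alpha> - m) \<ge> 0" using assms by simp
  ultimately have "(2 * M + m) * (\<alpha> - m) \<le> L^2" by (smt (verit) zero_le_power2)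
  then have "(2 * M + m) * ((\<alpha> - m) / L^2) \<le> 1" using L0 by (simp add: field_simps)
  then have "(norm (v - grad f x))^2 \<le> (L * sqrt (2 / (\<alpha> - m) * \<epsilon>))^2"
    using eps_subdiff_near_grad[OF sm v, of "(\<alpha> - m) / L^2"] assms L0
    by (simp add: power_mult_distrib field_simps)
  then show ?thesis using L0 assms by (simp add: L_def power2_le_iff_abs_le)
qed

lemma inexact_stationary_grad_norm_le:
  fixes f :: "real^'n \<Rightarrow> real"
  assumes "M_smooth M f" "inexact_stationary m \<eta> \<epsilon> f x"
    and "0 \<le> m" "m < \<alpha>" "0 \<le> \<epsilon>"
  shows "norm (grad f x) \<le> \<eta> + (\<alpha> + M) * sqrt (2 / (\<alpha> - m) * \<epsilon>)"
proof -
  have "norm (grad f x) \<le> infdist 0 (eps_subdiff m \<epsilon> f x) + (\<alpha> + M) * sqrt (2 / (\<alpha> - m) * \<epsilon>)"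
    using assms eps_subdiff_dist_grad_le unfolding inexact_stationary_def
    by (blast intro: norm_le_infdist_zero_add)
  then show ?thesis using assms(2) unfolding inexact_stationary_def by linarith
qed

theorem mainTheorem13:
  fixes f :: "real^'n \<Rightarrow> real" and x :: "real^'n"
    and m M \<alpha> lam \<eta> \<epsilon> :: real
  assumes "m \<ge> 0"
    and "weakly_convex m f"
    and "M_smooth M f"
    and "\<alpha> > m"
    and "lam = \<alpha> - m"
    and "\<eta> \<ge> 0" and "\<epsilon> \<ge> 0"
    and "inexact_stationary m \<eta> \<epsilon> f x"
  shows "norm (grad f x) \<le> (1 + M / \<alpha>) * \<alpha> * (2 / lam * \<eta> + sqrt (2 / lam * \<epsilon>))
    \<and> (\<forall>\<delta>::real. \<delta> \<ge> 0 \<longrightarrow> \<epsilon> \<le> 2 / lam * \<eta>^2 \<longrightarrow>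
           \<eta> \<le> \<delta> * lam / (4 * (1 + M / \<alpha>) * \<alpha>) \<longrightarrow> norm (grad f x) \<le> \<delta>)"
proof -
  define L where "L = \<alpha> + M"
  have lam0: "lam > 0" and L0: "L > 0" and lamL: "lam \<le> L"
    using assms M_smooth_nonneg[OF assms(3)] by (auto simp: L_def)
  have L_eq: "(1 + M / \<alpha>) * \<alpha> = L" and L4_eq: "4 * (1 + M / \<alpha>) * \<alpha> = 4 * L"
    using assms by (simp_all add: L_def field_simps)
  have "norm (grad f x) \<le> \<eta> + L * sqrt (2 / lam * \<epsilon>)"
    using inexact_stationary_grad_norm_le[OF assms(3,8,1,4,7)] by (simp add: L_def assms(5))
  moreover have "1 * \<eta> \<le> (L * (2 / lam)) * \<eta>"
    using lamL lam0 assms(6) by (intro mult_right_mono) (auto simp: field_simps)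
  ultimately have bound: "norm (grad f x) \<le> L * (2 / lam * \<eta> + sqrt (2 / lam * \<epsilon>))"
    by (simp add: distrib_left)
  have small: "norm (grad f x) \<le> \<delta>"
    if "\<epsilon> \<le> 2 / lam * \<eta>^2" "\<eta> \<le> \<delta> * lam / (4 * L)" for \<delta>
  proof -
    have "sqrt (2 / lam * \<epsilon>) \<le> sqrt ((2 / lam * \<eta>)^2)"
      using that(1) lam0 by (intro real_sqrt_le_mono) (simp add: power2_eq_square field_simps)
    then have "L * (2 / lam * \<eta> + sqrt (2 / lam * \<epsilon>)) \<le> L * (4 / lam * \<eta>)"
      using L0 assms(6) lam0 by (intro mult_left_mono) auto
    then have "norm (grad f x) \<le> L * (4 / lam * \<eta>)" using bound by linarith
    also have "\<dots> \<le> \<delta>" using that(2) L0 lam0 by (simp add: field_simps)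
    finally show ?thesis .
  qed
  show ?thesis unfolding L_eq L4_eq using bound small by blast
qed

end
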